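(* Let $(M,d)$ be a complete pointed metric space and $f\in\mathrm{Lip}_0(M,M)$ such that $\mathrm{int}(R_{\widehat f})\neq\emptyset$ and the orbit $\{f^n(x):n\in\mathbb N\}$ is finite for every $x\in M$. Then $R_{\widehat f}=\mathcal F(M)$.
   Context: A pointed metric space is a metric space with a distinguished point $0$. $\mathrm{Lip}_0(M,M)$ denotes the Lipschitz maps $f:M\to M$ with $f(0)=0$; $\mathrm{Lip}_0(M)$ the real-valued Lipschitz functions vanishing at $0$ normed by the Lipschitz constant. $\delta:M\to\mathrm{Lip}_0(M)^*$, $\delta(x)(\varphi)=\varphi(x)$; $\mathcal F(M)$ is the norm-closed linear span of $\delta(M)$. $\widehat f$ is the unique bounded linear operator on $\mathcal F(M)$ with $\widehat f(\delta(x))=\delta(f(x))$. For an operator $T$, $R_T=\{\mu:\liminf_{n}\|T^n\mu-\mu\|=0\}$. *)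

theory Defs
  imports "HOL-Analysis.Analysis"
begin

text \<open>The pointed metric space is the whole
type 'a with base point x0. Elements of Lip_0(M)^* are represented as
functionals on real-valued functions, vanishing outside Lip_0(M).\<close>

definition lip0 :: "'a::metric_space \<Rightarrow> ('a \<Rightarrow> real) \<Rightarrow> bool" where
  "lip0 x0 \<phi> \<longleftrightarrow> \<phi> x0 = 0 \<and> (\<exists>C. C-lipschitz_on UNIV \<phi>)"

definition lipball :: "'a::metric_space \<Rightarrow> ('a \<Rightarrow> real) set" where
  "lipball x0 = {\<phi>. \<phi> x0 = 0 \<and> 1-lipschitz_on UNIV \<phi>}"

definition delta :: "'a::metric_space \<Rightarrow> 'a \<Rightarrow> ('a \<Rightarrow> real) \<Rightarrow> real" where
  "delta x0 x = (\<lambda>\<phi>. if lip0 x0 \<phi> then \<phi> x else 0)"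

definition molecules :: "'a::metric_space \<Rightarrow> (('a \<Rightarrow> real) \<Rightarrow> real) set" where
  "molecules x0 = {(\<lambda>\<phi>. \<Sum>i<n. a i * delta x0 (p i) \<phi>) | (n::nat) a p. True}"

text \<open>F(M): norm closure (in Lip_0(M)^*) of the span of delta(M).\<close>
definition freespace :: "'a::metric_space \<Rightarrow> (('a \<Rightarrow> real) \<Rightarrow> real) set" where
  "freespace x0 = {\<mu>. (\<forall>\<phi>. \<not> lip0 x0 \<phi> \<longrightarrow> \<mu> \<phi> = 0) \<and>
      (\<forall>\<epsilon>>0. \<exists>\<nu>\<in>molecules x0. \<forall>\<phi>\<in>lipball x0. \<bar>\<mu> \<phi> - \<nu> \<phi>\<bar> \<le> \<epsilon>)}"

definition fnorm :: "'a::metric_space \<Rightarrow> (('a \<Rightarrow> real) \<Rightarrow> real) \<Rightarrow> real" where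
  "fnorm x0 \<mu> = Sup ((\<lambda>\<phi>. \<bar>\<mu> \<phi>\<bar>) ` lipball x0)"

definition recurrent_set :: "'a::metric_space \<Rightarrow> ((('a \<Rightarrow> real) \<Rightarrow> real) \<Rightarrow> (('a \<Rightarrow> real) \<Rightarrow> real))
    \<Rightarrow> (('a \<Rightarrow> real) \<Rightarrow> real) set" where
  "recurrent_set x0 T = {\<mu> \<in> freespace x0.
      liminf (\<lambda>n. ereal (fnorm x0 ((T ^^ n) \<mu> - \<mu>))) = 0}"

end

theory Submission
  imports Defs
begin

text \<open>Take a nonempty open set inside \<open>R\<^sub>T\<close>; by density it contains a ball around a
molecule \<open>m\<close>. The orbit of a molecule under the induced operator is finite, since every
point of \<open>M\<close> has a finite orbit, so the distances \<open>\<parallel>T\<^sup>n m - m\<parallel>\<close> take finitely many values;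
recurrence of \<open>m\<close> then forces \<open>T\<^sup>p m = m\<close> for some \<open>p > 0\<close>. A recurrent vector stays
recurrent along the multiples of any fixed \<open>p\<close>. For arbitrary \<open>\<mu>\<close>, the vector \<open>m + c \<mu>\<close> lies in the ball for small
\<open>c > 0\<close>, and along multiples of \<open>p\<close> its recurrence is exactly that of \<open>\<mu>\<close>, scaled by \<open>c\<close>.\<close>

section \<open>The dual norm\<close>

definition dual_bounded :: "'a::metric_space \<Rightarrow> (('a \<Rightarrow> real) \<Rightarrow> real) \<Rightarrow> bool" where
  "dual_bounded x0 \<mu> \<longleftrightarrow> (\<exists>B. \<forall>\<phi>\<in>lipball x0. \<bar>\<mu> \<phi>\<bar> \<le> B)"

lemma zero_in_lipball: "(\<lambda>_. 0) \<in> lipball x0"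
  unfolding lipball_def by (auto intro: lipschitz_onI)

lemma lip0_if_in_lipball: "\<phi> \<in> lipball x0 \<Longrightarrow> lip0 x0 \<phi>"
  unfolding lipball_def lip0_def by auto

lemma abs_le_dist_if_in_lipball:
  assumes "\<phi> \<in> lipball x0"
  shows "\<bar>\<phi> x\<bar> \<le> dist x x0"
proof -
  have "dist (\<phi> x) (\<phi> x0) \<le> 1 * dist x x0" "\<phi> x0 = 0"
    using assms lipschitz_onD[of 1 UNIV \<phi> x x0] unfolding lipball_def by auto
  then show ?thesis by (simp add: dist_real_def)
qed

lemma fnorm_le: "(\<And>\<phi>. \<phi> \<in> lipball x0 \<Longrightarrow> \<bar>\<mu> \<phi>\<bar> \<le> B) \<Longrightarrow> fnorm x0 \<mu> \<le> B"
  unfolding fnorm_def using zero_in_lipball by (intro cSup_least) auto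

lemma abs_le_fnorm: "dual_bounded x0 \<mu> \<Longrightarrow> \<phi> \<in> lipball x0 \<Longrightarrow> \<bar>\<mu> \<phi>\<bar> \<le> fnorm x0 \<mu>"
  unfolding fnorm_def dual_bounded_def by (intro cSup_upper) (auto simp: bdd_above_def)

lemma fnorm_nonneg: "dual_bounded x0 \<mu> \<Longrightarrow> 0 \<le> fnorm x0 \<mu>"
  using abs_le_fnorm[OF _ zero_in_lipball] by (meson abs_ge_zero order_trans)

lemma abs_lincomb_le_fnorm:
  assumes "dual_bounded x0 \<mu>" "dual_bounded x0 \<nu>" "\<phi> \<in> lipball x0"
  shows "\<bar>a * \<mu> \<phi> + b * \<nu> \<phi>\<bar> \<le> \<bar>a\<bar> * fnorm x0 \<mu> + \<bar>b\<bar> * fnorm x0 \<nu>"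
proof -
  have "\<bar>a * \<mu> \<phi> + b * \<nu> \<phi>\<bar> \<le> \<bar>a\<bar> * \<bar>\<mu> \<phi>\<bar> + \<bar>b\<bar> * \<bar>\<nu> \<phi>\<bar>"
    by (metis abs_mult abs_triangle_ineq)
  also have "\<dots> \<le> \<bar>a\<bar> * fnorm x0 \<mu> + \<bar>b\<bar> * fnorm x0 \<nu>"
    using assms abs_le_fnorm by (intro add_mono mult_left_mono) auto
  finally show ?thesis .
qed

lemma fnorm_lincomb_le:
  "dual_bounded x0 \<mu> \<Longrightarrow> dual_bounded x0 \<nu> \<Longrightarrow>
    fnorm x0 (\<lambda>\<phi>. a * \<mu> \<phi> + b * \<nu> \<phi>) \<le> \<bar>a\<bar> * fnorm x0 \<mu> + \<bar>b\<bar> * fnorm x0 \<nu>"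
  by (intro fnorm_le abs_lincomb_le_fnorm)

lemma fnorm_add_le:
  "dual_bounded x0 \<mu> \<Longrightarrow> dual_bounded x0 \<nu> \<Longrightarrow>
    fnorm x0 (\<lambda>\<phi>. \<mu> \<phi> + \<nu> \<phi>) \<le> fnorm x0 \<mu> + fnorm x0 \<nu>"
  using fnorm_lincomb_le[of x0 \<mu> \<nu> 1 1] by simp

lemma fnorm_scale_le: "dual_bounded x0 \<mu> \<Longrightarrow> fnorm x0 (\<lambda>\<phi>. c * \<mu> \<phi>) \<le> \<bar>c\<bar> * fnorm x0 \<mu>"
  using fnorm_lincomb_le[of x0 \<mu> \<mu> c 0] by simp

section \<open>Molecules and the free space\<close>

definition molecule :: "'a::metric_space \<Rightarrow> nat \<Rightarrow> (nat \<Rightarrow> real) \<Rightarrow> (nat \<Rightarrow> 'a)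
    \<Rightarrow> ('a \<Rightarrow> real) \<Rightarrow> real" where
  "molecule x0 n a p = (\<lambda>\<phi>. \<Sum>i<n. a i * delta x0 (p i) \<phi>)"

lemma molecules_eq: "molecules x0 = {molecule x0 n a p | n a p. True}"
  unfolding molecules_def molecule_def ..

lemma molecule_bounded: "dual_bounded x0 (molecule x0 n a p)"
proof -
  have "\<bar>molecule x0 n a p \<phi>\<bar> \<le> (\<Sum>i<n. \<bar>a i\<bar> * dist (p i) x0)" if "\<phi> \<in> lipball x0" for \<phi>
  proof -
    have "\<bar>molecule x0 n a p \<phi>\<bar> \<le> (\<Sum>i<n. \<bar>a i * delta x0 (p i) \<phi>\<bar>)"
      unfolding molecule_def by (rule sum_abs)
    also have "\<dots> \<le> (\<Sum>i<n. \<bar>a i\<bar> * dist (p i) x0)"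
      using lip0_if_in_lipball[OF that] abs_le_dist_if_in_lipball[OF that]
      by (intro sum_mono) (auto simp: delta_def abs_mult intro: mult_left_mono)
    finally show ?thesis .
  qed
  then show ?thesis unfolding dual_bounded_def by blast
qed

lemma molecule_lincomb:
  "(\<lambda>\<phi>. c * molecule x0 n a p \<phi> + d * molecule x0 m b q \<phi>)
    = molecule x0 (n + m) (\<lambda>i. if i < n then c * a i else d * b (i - n))
        (\<lambda>i. if i < n then p i else q (i - n))"
proof
  fix \<phi>
  define g where "g i = (if i < n then c * a i else d * b (i - n))
    * delta x0 (if i < n then p i else q (i - n)) \<phi>" for i
  have "molecule x0 (n + m) (\<lambda>i. if i < n then c * a i else d * b (i - n))
      (\<lambda>i. if i < n then p i else q (i - n)) \<phi> = (\<Sum>i<n. g i) + (\<Sum>i\<in>{n..<n+m}. g i)"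
    unfolding molecule_def g_def lessThan_atLeast0 by (rule sum.atLeastLessThan_concat[symmetric]) auto
  also have "(\<Sum>i<n. g i) = c * molecule x0 n a p \<phi>"
    unfolding molecule_def g_def by (simp add: sum_distrib_left mult.assoc)
  also have "(\<Sum>i\<in>{n..<n+m}. g i) = (\<Sum>i\<in>{0..<m}. g (i + n))"
    using sum.shift_bounds_nat_ivl[of g 0 n m] by (simp add: add.commute)
  also have "\<dots> = d * molecule x0 m b q \<phi>"
    unfolding molecule_def g_def by (simp add: sum_distrib_left mult.assoc lessThan_atLeast0)
  finally show "c * molecule x0 n a p \<phi> + d * molecule x0 m b q \<phi> = molecule x0 (n + m)
      (\<lambda>i. if i < n then c * a i else d * b (i - n)) (\<lambda>i. if i < n then p i else q (i - n)) \<phi>"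
    by simp
qed

lemma diff_eq_lincomb: "(\<mu> :: ('a \<Rightarrow> real) \<Rightarrow> real) - \<nu> = (\<lambda>\<phi>. 1 * \<mu> \<phi> + (-1) * \<nu> \<phi>)"
  by auto

lemma molecules_lincomb:
  assumes "\<mu> \<in> molecules x0" "\<nu> \<in> molecules x0"
  shows "(\<lambda>\<phi>. a * \<mu> \<phi> + b * \<nu> \<phi>) \<in> molecules x0"
proof -
  obtain n c p m d q where \<mu>: "\<mu> = molecule x0 n c p" and \<nu>: "\<nu> = molecule x0 m d q"
    using assms unfolding molecules_eq by blast
  show ?thesis unfolding \<mu> \<nu> molecules_eq molecule_lincomb by blast
qed

lemma molecules_diff: "\<mu> \<in> molecules x0 \<Longrightarrow> \<nu> \<in> molecules x0 \<Longrightarrow> \<mu> - \<nu> \<in> molecules x0"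
  unfolding diff_eq_lincomb by (rule molecules_lincomb)

lemma molecule_eq_0_if_fnorm_eq_0:
  assumes "\<nu> \<in> molecules x0" "fnorm x0 \<nu> = 0"
  shows "\<nu> = (\<lambda>_. 0)"
proof
  fix \<phi>
  obtain n a p where \<nu>: "\<nu> = molecule x0 n a p" using assms(1) unfolding molecules_eq by blast
  show "\<nu> \<phi> = 0"
  proof (cases "lip0 x0 \<phi>")
    case False
    then show ?thesis by (simp add: \<nu> molecule_def delta_def)
  next
    case True
    then obtain C where C: "C-lipschitz_on UNIV \<phi>" "\<phi> x0 = 0" unfolding lip0_def by auto
    have "0 \<le> C" using lipschitz_on_nonneg[OF C(1)] .
    define \<psi> where "\<psi> x = \<phi> x / (C + 1)" for x
    have "(\<bar>1 / (C + 1)\<bar> * C)-lipschitz_on UNIV (\<lambda>x. 1 / (C + 1) * \<phi> x)"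
      by (rule lipschitz_on_cmult_real[OF C(1)])
    moreover have "\<bar>1 / (C + 1)\<bar> * C \<le> 1" using \<open>0 \<le> C\<close> by (simp add: field_simps)
    ultimately have "1-lipschitz_on UNIV \<psi>" unfolding \<psi>_def by (auto intro: lipschitz_on_mono)
    then have \<psi>: "\<psi> \<in> lipball x0" using C(2) unfolding lipball_def \<psi>_def by auto
    have "\<bar>\<nu> \<psi>\<bar> \<le> 0" using abs_le_fnorm[OF molecule_bounded[of x0 n a p] \<psi>] assms(2) \<nu> by simp
    moreover have "\<nu> \<psi> = \<nu> \<phi> / (C + 1)"
      using True lip0_if_in_lipball[OF \<psi>] unfolding \<nu> molecule_def delta_def \<psi>_def
      by (simp add: sum_divide_distrib)
    ultimately show ?thesis using \<open>0 \<le> C\<close> by (simp add: divide_le_0_iff)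
  qed
qed

lemma molecule_in_freespace: "molecule x0 n a p \<in> freespace x0"
proof -
  have "\<forall>\<phi>. \<not> lip0 x0 \<phi> \<longrightarrow> molecule x0 n a p \<phi> = 0" by (simp add: molecule_def delta_def)
  moreover have "\<exists>\<nu>\<in>molecules x0. \<forall>\<phi>\<in>lipball x0. \<bar>molecule x0 n a p \<phi> - \<nu> \<phi>\<bar> \<le> \<epsilon>"
    if "\<epsilon> > 0" for \<epsilon>
    using that by (intro bexI[of _ "molecule x0 n a p"]) (auto simp: molecules_eq)
  ultimately show ?thesis unfolding freespace_def by blast
qed

lemma freespace_approx:
  assumes "\<mu> \<in> freespace x0" "\<epsilon> > 0"
  obtains n a p where "fnorm x0 (molecule x0 n a p - \<mu>) \<le> \<epsilon>"
proof -
  obtain n a p where "\<forall>\<phi>\<in>lipball x0. \<bar>\<mu> \<phi> - molecule x0 n a p \<phi>\<bar> \<le> \<epsilon>"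
    using assms unfolding freespace_def molecules_eq by blast
  then have "fnorm x0 (molecule x0 n a p - \<mu>) \<le> \<epsilon>"
    by (intro fnorm_le) (simp add: abs_minus_commute)
  then show ?thesis by (rule that)
qed

lemma freespace_bounded:
  assumes "\<mu> \<in> freespace x0"
  shows "dual_bounded x0 \<mu>"
proof -
  obtain \<nu> where \<nu>: "\<nu> \<in> molecules x0" "\<forall>\<phi>\<in>lipball x0. \<bar>\<mu> \<phi> - \<nu> \<phi>\<bar> \<le> 1"
    using assms zero_less_one unfolding freespace_def by blast
  then obtain B where B: "\<forall>\<phi>\<in>lipball x0. \<bar>\<nu> \<phi>\<bar> \<le> B"
    using molecule_bounded unfolding molecules_eq dual_bounded_def by blast
  have "\<bar>\<mu> \<phi>\<bar> \<le> B + 1" if "\<phi> \<in> lipball x0" for \<phi>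
    using B \<nu>(2) that by force
  then show ?thesis unfolding dual_bounded_def by blast
qed

lemma freespace_lincomb:
  assumes "\<mu> \<in> freespace x0" "\<nu> \<in> freespace x0"
  shows "(\<lambda>\<phi>. a * \<mu> \<phi> + b * \<nu> \<phi>) \<in> freespace x0"
proof -
  have "\<exists>\<rho>\<in>molecules x0. \<forall>\<phi>\<in>lipball x0. \<bar>a * \<mu> \<phi> + b * \<nu> \<phi> - \<rho> \<phi>\<bar> \<le> \<epsilon>"
    if "\<epsilon> > 0" for \<epsilon>
  proof -
    define e where "e = \<epsilon> / (\<bar>a\<bar> + \<bar>b\<bar> + 1)"
    have "e > 0" using that by (simp add: e_def add_nonneg_pos)
    obtain \<mu>' where \<mu>': "\<mu>' \<in> molecules x0" "\<forall>\<phi>\<in>lipball x0. \<bar>\<mu> \<phi> - \<mu>' \<phi>\<bar> \<le> e"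
      using assms(1) \<open>e > 0\<close> unfolding freespace_def by auto
    obtain \<nu>' where \<nu>': "\<nu>' \<in> molecules x0" "\<forall>\<phi>\<in>lipball x0. \<bar>\<nu> \<phi> - \<nu>' \<phi>\<bar> \<le> e"
      using assms(2) \<open>e > 0\<close> unfolding freespace_def by auto
    have "(\<lambda>\<phi>. a * \<mu>' \<phi> + b * \<nu>' \<phi>) \<in> molecules x0"
      using \<mu>'(1) \<nu>'(1) by (rule molecules_lincomb)
    moreover have "\<bar>a * \<mu> \<phi> + b * \<nu> \<phi> - (a * \<mu>' \<phi> + b * \<nu>' \<phi>)\<bar> \<le> \<epsilon>"
      if "\<phi> \<in> lipball x0" for \<phi>
    proof -
      have "\<bar>a * \<mu> \<phi> + b * \<nu> \<phi> - (a * \<mu>' \<phi> + b * \<nu>' \<phi>)\<bar>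
          = \<bar>a * (\<mu> \<phi> - \<mu>' \<phi>) + b * (\<nu> \<phi> - \<nu>' \<phi>)\<bar>"
        by (simp add: algebra_simps)
      also have "\<dots> \<le> \<bar>a\<bar> * \<bar>\<mu> \<phi> - \<mu>' \<phi>\<bar> + \<bar>b\<bar> * \<bar>\<nu> \<phi> - \<nu>' \<phi>\<bar>"
        by (metis abs_mult abs_triangle_ineq)
      also have "\<dots> \<le> \<bar>a\<bar> * e + \<bar>b\<bar> * e"
        using \<mu>' \<nu>' that by (intro add_mono mult_left_mono) auto
      also have "\<dots> \<le> (\<bar>a\<bar> + \<bar>b\<bar> + 1) * e" using \<open>e > 0\<close> by (simp add: algebra_simps)
      also have "\<dots> = \<epsilon>" unfolding e_def by (simp add: add_nonneg_pos)
      finally show ?thesis .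
    qed
    ultimately show ?thesis by (intro bexI[of _ "\<lambda>\<phi>. a * \<mu>' \<phi> + b * \<nu>' \<phi>"]) auto
  qed
  with assms show ?thesis unfolding freespace_def by auto
qed

lemma freespace_diff: "\<mu> \<in> freespace x0 \<Longrightarrow> \<nu> \<in> freespace x0 \<Longrightarrow> \<mu> - \<nu> \<in> freespace x0"
  unfolding diff_eq_lincomb by (rule freespace_lincomb)

lemma molecule_ball_within:
  assumes "\<mu> \<in> freespace x0" "\<epsilon> > 0"
    and ball: "\<forall>\<nu>\<in>freespace x0. fnorm x0 (\<nu> - \<mu>) < \<epsilon> \<longrightarrow> \<nu> \<in> S"
  obtains n a p where "\<forall>\<nu>\<in>freespace x0. fnorm x0 (\<nu> - molecule x0 n a p) < \<epsilon> / 2 \<longrightarrow> \<nu> \<in> S"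
proof -
  have "\<epsilon> / 4 > 0" using \<open>\<epsilon> > 0\<close> by simp
  then obtain n a p where approx: "fnorm x0 (molecule x0 n a p - \<mu>) \<le> \<epsilon> / 4"
    using freespace_approx[OF assms(1)] by blast
  define m where "m = molecule x0 n a p"
  have "\<nu> \<in> S" if "\<nu> \<in> freespace x0" "fnorm x0 (\<nu> - m) < \<epsilon> / 2" for \<nu>
  proof -
    have m: "m \<in> freespace x0" unfolding m_def by (rule molecule_in_freespace)
    have "\<nu> - \<mu> = (\<lambda>\<phi>. (\<nu> - m) \<phi> + (m - \<mu>) \<phi>)" by auto
    then have "fnorm x0 (\<nu> - \<mu>) \<le> fnorm x0 (\<nu> - m) + fnorm x0 (m - \<mu>)"
      using that(1) m assms(1) by (simp only:) (intro fnorm_add_le freespace_bounded freespace_diff)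
    also have "\<dots> < \<epsilon>" using that(2) approx \<open>\<epsilon> > 0\<close> unfolding m_def by simp
    finally show ?thesis using ball that(1) by blast
  qed
  then show ?thesis using that unfolding m_def by blast
qed

section \<open>Frequently small real sequences\<close>

lemma liminf_eq_0_iff_frequently_less:
  fixes X :: "nat \<Rightarrow> real"
  assumes "\<And>n. 0 \<le> X n"
  shows "liminf (\<lambda>n. ereal (X n)) = 0 \<longleftrightarrow> (\<forall>\<delta>>0. \<exists>\<^sub>F n in sequentially. X n < \<delta>)"
proof
  assume L: "liminf (\<lambda>n. ereal (X n)) = 0"
  show "\<forall>\<delta>>0. \<exists>\<^sub>F n in sequentially. X n < \<delta>"
  proof (intro allI impI, rule ccontr)
    fix \<delta> :: real assume "\<delta> > 0" "\<not> (\<exists>\<^sub>F n in sequentially. X n < \<delta>)"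
    then have "\<forall>\<^sub>F n in sequentially. ereal \<delta> \<le> ereal (X n)"
      by (simp add: not_frequently not_less)
    then have "ereal \<delta> \<le> liminf (\<lambda>n. ereal (X n))" by (rule Liminf_bounded)
    with L \<open>\<delta> > 0\<close> show False by simp
  qed
next
  assume small: "\<forall>\<delta>>0. \<exists>\<^sub>F n in sequentially. X n < \<delta>"
  have "0 \<le> liminf (\<lambda>n. ereal (X n))"
    using assms by (intro Liminf_bounded) auto
  moreover have "\<not> 0 < liminf (\<lambda>n. ereal (X n))"
  proof
    assume "0 < liminf (\<lambda>n. ereal (X n))"
    then obtain z :: real where z: "0 < ereal z" "ereal z < liminf (\<lambda>n. ereal (X n))"
      using ereal_dense2 by blast
    then have "\<forall>\<^sub>F n in sequentially. z < X n" using less_LiminfD by fastforce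
    moreover have "\<exists>\<^sub>F n in sequentially. X n < z" using small z(1) by simp
    ultimately have "\<exists>\<^sub>F n in sequentially. X n < z \<and> z < X n"
      by (intro frequently_eventually_frequently)
    then have "\<exists>\<^sub>F n in sequentially. False" by (rule frequently_elim1) linarith
    then show False by simp
  qed
  ultimately show "liminf (\<lambda>n. ereal (X n)) = 0" by simp
qed

lemma frequently_eq_0_if_finite_range:
  fixes d :: "nat \<Rightarrow> real"
  assumes "finite (range d)" "\<And>n. 0 \<le> d n"
    and small: "\<And>\<delta>. \<delta> > 0 \<Longrightarrow> \<exists>\<^sub>F n in sequentially. d n < \<delta>"
  shows "\<exists>\<^sub>F n in sequentially. d n = 0"
proof -
  define D where "D = range d \<inter> {0<..}"
  define \<delta> where "\<delta> = (if D = {} then 1 else Min D)"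
  have "finite D" using assms(1) by (simp add: D_def)
  then have "\<delta> > 0" by (auto simp: \<delta>_def D_def)
  have zero: "d n = 0" if "d n < \<delta>" for n
  proof (rule ccontr)
    assume "d n \<noteq> 0"
    then have "d n \<in> D" using assms(2)[of n] by (simp add: D_def)
    then have "\<delta> \<le> d n" using \<open>finite D\<close> by (auto simp: \<delta>_def)
    with that show False by simp
  qed
  show ?thesis by (rule frequently_elim1[OF small[OF \<open>\<delta> > 0\<close>] zero])
qed

definition frequently_small_mod :: "(nat \<Rightarrow> real) \<Rightarrow> nat \<Rightarrow> nat \<Rightarrow> bool" where
  "frequently_small_mod d q r \<longleftrightarrow>
    (\<forall>\<delta>>0. \<exists>\<^sub>F n in sequentially. n mod q = r mod q \<and> d n < \<delta>)"

lemma frequently_small_mod_exists: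
  fixes d :: "nat \<Rightarrow> real"
  assumes small: "\<And>\<delta>. \<delta> > 0 \<Longrightarrow> \<exists>\<^sub>F n in sequentially. d n < \<delta>" and "q > 0"
  shows "\<exists>r. frequently_small_mod d q r"
proof (rule ccontr)
  assume "\<nexists>r. frequently_small_mod d q r"
  then have "\<forall>r. \<exists>\<delta>>0. \<forall>\<^sub>F n in sequentially. n mod q = r mod q \<longrightarrow> \<delta> \<le> d n"
    unfolding frequently_small_mod_def by (auto simp: not_frequently not_less)
  then obtain D where D: "\<And>r. D r > 0"
    "\<And>r. \<forall>\<^sub>F n in sequentially. n mod q = r mod q \<longrightarrow> D r \<le> d n"
    by metis
  define \<delta> where "\<delta> = Min (D ` {..<q})"
  have "\<delta> > 0" unfolding \<delta>_def using \<open>q > 0\<close> D(1) by (subst Min_gr_iff) auto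
  have "\<forall>\<^sub>F n in sequentially. \<forall>r\<in>{..<q}. n mod q = r mod q \<longrightarrow> D r \<le> d n"
    by (intro eventually_ball_finite ballI finite_lessThan D(2))
  then have "\<forall>\<^sub>F n in sequentially. \<delta> \<le> d n"
  proof (rule eventually_mono)
    fix n assume "\<forall>r\<in>{..<q}. n mod q = r mod q \<longrightarrow> D r \<le> d n"
    moreover have "n mod q < q" using \<open>q > 0\<close> by simp
    moreover have "\<delta> \<le> D (n mod q)" unfolding \<delta>_def using \<open>q > 0\<close> by (intro Min_le) auto
    ultimately show "\<delta> \<le> d n" by force
  qed
  moreover have "\<exists>\<^sub>F n in sequentially. d n < \<delta>" using small \<open>\<delta> > 0\<close> .
  ultimately have "\<exists>\<^sub>F n in sequentially. d n < \<delta> \<and> \<delta> \<le> d n"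
    by (intro frequently_eventually_frequently)
  then have "\<exists>\<^sub>F n in sequentially. False" by (rule frequently_elim1) linarith
  then show False by simp
qed

text \<open>The inequality \<open>d (n + m) \<le> B n * d m + d n\<close> is what \<open>d n = \<parallel>T\<^sup>n \<nu> - \<nu>\<parallel>\<close> satisfies
with \<open>B n = \<parallel>T\<^sup>n\<parallel>\<close>.\<close>

lemma frequently_small_mod_add:
  fixes d B :: "nat \<Rightarrow> real"
  assumes shift: "\<And>n m. d (n + m) \<le> B n * d m + d n" and B: "\<And>n. 0 \<le> B n"
    and "frequently_small_mod d q s" "frequently_small_mod d q r"
  shows "frequently_small_mod d q (s + r)"
  unfolding frequently_small_mod_def frequently_sequentially
proof (intro allI impI)
  fix \<delta> :: real and N assume "\<delta> > 0"
  obtain n where n: "n \<ge> N" "n mod q = s mod q" "d n < \<delta> / 2"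
    using assms(3) \<open>\<delta> > 0\<close> unfolding frequently_small_mod_def frequently_sequentially
    by (meson half_gt_zero)
  have "\<delta> / (2 * (B n + 1)) > 0" using \<open>\<delta> > 0\<close> B[of n] by simp
  then obtain m where m: "m mod q = r mod q" "d m < \<delta> / (2 * (B n + 1))"
    using assms(4) unfolding frequently_small_mod_def frequently_sequentially by blast
  have "d (n + m) \<le> B n * (\<delta> / (2 * (B n + 1))) + \<delta> / 2"
    using shift[of n m] m(2) n(3) B[of n] by (smt (verit) mult_left_mono)
  also have "\<dots> < \<delta>" using B[of n] \<open>\<delta> > 0\<close> by (simp add: field_simps)
  finally have "d (n + m) < \<delta>" .
  moreover have "(n + m) mod q = (s + r) mod q" using n(2) m(1) by (metis mod_add_cong)
  ultimately show "\<exists>k\<ge>N. k mod q = (s + r) mod q \<and> d k < \<delta>"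
    using n(1) by (intro exI[of _ "n + m"]) auto
qed

lemma frequently_small_along_multiples:
  fixes d B :: "nat \<Rightarrow> real"
  assumes shift: "\<And>n m. d (n + m) \<le> B n * d m + d n" and B: "\<And>n. 0 \<le> B n"
    and small: "\<And>\<delta>. \<delta> > 0 \<Longrightarrow> \<exists>\<^sub>F n in sequentially. d n < \<delta>"
    and "q > 0" "\<delta> > 0"
  shows "\<exists>\<^sub>F n in sequentially. q dvd n \<and> d n < \<delta>"
proof -
  obtain r where r: "frequently_small_mod d q r"
    using frequently_small_mod_exists[OF small \<open>q > 0\<close>] by blast
  have "frequently_small_mod d q (Suc k * r)" for k
  proof (induction k)
    case (Suc k)
    then show ?case
      using frequently_small_mod_add[OF shift B Suc r] by (simp add: add.commute)
  qed (simp add: r)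
  from this[of "q - 1"] have "frequently_small_mod d q (q * r)" using \<open>q > 0\<close> by simp
  then show ?thesis
    using \<open>\<delta> > 0\<close> unfolding frequently_small_mod_def by (simp add: dvd_eq_mod_eq_0)
qed

section \<open>Bounded linear operators on the free space\<close>

locale free_operator =
  fixes x0 :: "'a::metric_space" and T :: "(('a \<Rightarrow> real) \<Rightarrow> real) \<Rightarrow> (('a \<Rightarrow> real) \<Rightarrow> real)"
  assumes maps: "\<forall>\<mu>\<in>freespace x0. T \<mu> \<in> freespace x0"
    and lin: "\<forall>\<mu>\<in>freespace x0. \<forall>\<nu>\<in>freespace x0. \<forall>a b::real.
        T (\<lambda>\<phi>. a * \<mu> \<phi> + b * \<nu> \<phi>) = (\<lambda>\<phi>. a * T \<mu> \<phi> + b * T \<nu> \<phi>)"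
    and bdd: "\<exists>K. \<forall>\<mu>\<in>freespace x0. fnorm x0 (T \<mu>) \<le> K * fnorm x0 \<mu>"
begin

lemma funpow_in_freespace: "\<mu> \<in> freespace x0 \<Longrightarrow> (T ^^ n) \<mu> \<in> freespace x0"
  using maps by (induction n) auto

lemma funpow_lincomb:
  assumes "\<mu> \<in> freespace x0" "\<nu> \<in> freespace x0"
  shows "(T ^^ n) (\<lambda>\<phi>. a * \<mu> \<phi> + b * \<nu> \<phi>) = (\<lambda>\<phi>. a * (T ^^ n) \<mu> \<phi> + b * (T ^^ n) \<nu> \<phi>)"
  by (induction n) (use lin funpow_in_freespace assms in auto)

lemma funpow_diff:
  "\<mu> \<in> freespace x0 \<Longrightarrow> \<nu> \<in> freespace x0 \<Longrightarrow> (T ^^ n) (\<mu> - \<nu>) = (T ^^ n) \<mu> - (T ^^ n) \<nu>"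
  unfolding diff_eq_lincomb by (rule funpow_lincomb)

lemma funpow_fnorm_le:
  obtains K where "0 \<le> K" "\<And>n \<mu>. \<mu> \<in> freespace x0 \<Longrightarrow> fnorm x0 ((T ^^ n) \<mu>) \<le> K ^ n * fnorm x0 \<mu>"
proof -
  obtain K where K: "\<forall>\<mu>\<in>freespace x0. fnorm x0 (T \<mu>) \<le> K * fnorm x0 \<mu>" using bdd by blast
  have step: "fnorm x0 (T \<mu>) \<le> \<bar>K\<bar> * fnorm x0 \<mu>" if "\<mu> \<in> freespace x0" for \<mu>
    using K that fnorm_nonneg[OF freespace_bounded[OF that]]
    by (smt (verit) abs_ge_self mult_right_mono)
  have "fnorm x0 ((T ^^ n) \<mu>) \<le> \<bar>K\<bar> ^ n * fnorm x0 \<mu>" if "\<mu> \<in> freespace x0" for n \<mu>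
  proof (induction n)
    case (Suc n)
    have "fnorm x0 ((T ^^ Suc n) \<mu>) \<le> \<bar>K\<bar> * fnorm x0 ((T ^^ n) \<mu>)"
      using step funpow_in_freespace[OF that] by simp
    also have "\<dots> \<le> \<bar>K\<bar> * (\<bar>K\<bar> ^ n * fnorm x0 \<mu>)"
      using Suc by (intro mult_left_mono) auto
    finally show ?case by (simp add: mult.assoc)
  qed simp
  then show ?thesis using that[of "\<bar>K\<bar>"] by simp
qed

lemma recurrent_set_iff:
  "\<mu> \<in> recurrent_set x0 T \<longleftrightarrow>
    \<mu> \<in> freespace x0 \<and> (\<forall>\<delta>>0. \<exists>\<^sub>F n in sequentially. fnorm x0 ((T ^^ n) \<mu> - \<mu>) < \<delta>)"
  unfolding recurrent_set_def
  by (auto simp: liminf_eq_0_iff_frequently_less fnorm_nonneg freespace_bounded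
      freespace_diff funpow_in_freespace)

lemma recurrent_along_multiples:
  assumes "\<nu> \<in> recurrent_set x0 T" "q > 0" "\<delta> > 0"
  shows "\<exists>\<^sub>F n in sequentially. q dvd n \<and> fnorm x0 ((T ^^ n) \<nu> - \<nu>) < \<delta>"
proof -
  have \<nu>: "\<nu> \<in> freespace x0" using assms(1) recurrent_set_iff by blast
  obtain K where K: "0 \<le> K" "\<And>n \<mu>. \<mu> \<in> freespace x0 \<Longrightarrow> fnorm x0 ((T ^^ n) \<mu>) \<le> K ^ n * fnorm x0 \<mu>"
    using funpow_fnorm_le by blast
  define d where "d n = fnorm x0 ((T ^^ n) \<nu> - \<nu>)" for n
  have diff_in: "(T ^^ n) \<nu> - \<nu> \<in> freespace x0" for n
    using \<nu> by (intro freespace_diff funpow_in_freespace)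
  have "d (n + m) \<le> K ^ n * d m + d n" for n m
  proof -
    have "(T ^^ (n + m)) \<nu> - \<nu> = (\<lambda>\<phi>. (T ^^ n) ((T ^^ m) \<nu> - \<nu>) \<phi> + ((T ^^ n) \<nu> - \<nu>) \<phi>)"
      using funpow_diff[OF funpow_in_freespace[OF \<nu>] \<nu>] by (auto simp: funpow_add)
    then have "d (n + m) \<le> fnorm x0 ((T ^^ n) ((T ^^ m) \<nu> - \<nu>)) + d n"
      unfolding d_def by (simp only:) (intro fnorm_add_le freespace_bounded diff_in funpow_in_freespace)
    also have "\<dots> \<le> K ^ n * d m + d n" unfolding d_def using K(2)[OF diff_in] by simp
    finally show ?thesis .
  qed
  then show ?thesis
    using frequently_small_along_multiples[of d "\<lambda>n. K ^ n" q \<delta>] K(1) assms recurrent_set_iff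
    unfolding d_def by auto
qed

lemma recurrent_finite_orbit_returns:
  assumes "\<mu> \<in> recurrent_set x0 T" "finite (range (\<lambda>n. (T ^^ n) \<mu>))"
  obtains p where "p > 0" "fnorm x0 ((T ^^ p) \<mu> - \<mu>) = 0"
proof -
  have \<mu>: "\<mu> \<in> freespace x0" using assms(1) recurrent_set_iff by blast
  define d where "d n = fnorm x0 ((T ^^ n) \<mu> - \<mu>)" for n
  have "range d = (\<lambda>\<nu>. fnorm x0 (\<nu> - \<mu>)) ` range (\<lambda>n. (T ^^ n) \<mu>)"
    unfolding d_def by auto
  then have "\<exists>\<^sub>F n in sequentially. d n = 0"
    using assms recurrent_set_iff \<mu> unfolding d_def
    by (intro frequently_eq_0_if_finite_range)
      (auto intro: fnorm_nonneg freespace_bounded freespace_diff funpow_in_freespace)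
  then obtain p where "p \<ge> 1" "d p = 0" unfolding frequently_sequentially by blast
  then show ?thesis using that[of p] unfolding d_def by simp
qed

lemma funpow_dvd_period: "(T ^^ p) m = m \<Longrightarrow> p dvd n \<Longrightarrow> (T ^^ n) m = m"
proof -
  assume period: "(T ^^ p) m = m" and "p dvd n"
  from \<open>p dvd n\<close> obtain j where "n = p * j" by (rule dvdE)
  moreover have "((T ^^ p) ^^ j) m = m" by (induction j) (simp_all add: period)
  ultimately show ?thesis by (simp add: funpow_mult)
qed

text \<open>Along multiples of \<open>p\<close> the periodic vector \<open>m\<close> drops out of \<open>T\<^sup>n \<nu> - \<nu>\<close>, leaving
\<open>c (T\<^sup>n \<mu> - \<mu>)\<close>.\<close>

lemma recurrent_if_periodic_translate_recurrent:
  assumes m: "m \<in> freespace x0" and period: "(T ^^ p) m = m" "p > 0"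
    and \<mu>: "\<mu> \<in> freespace x0" and "c > 0"
    and \<nu>_rec: "(\<lambda>\<phi>. 1 * m \<phi> + c * \<mu> \<phi>) \<in> recurrent_set x0 T" (is "?\<nu> \<in> _")
  shows "\<mu> \<in> recurrent_set x0 T"
proof -
  have "\<exists>\<^sub>F n in sequentially. fnorm x0 ((T ^^ n) \<mu> - \<mu>) < \<delta>" if "\<delta> > 0" for \<delta>
  proof -
    have "c * \<delta> > 0" using \<open>c > 0\<close> \<open>\<delta> > 0\<close> by simp
    have small: "fnorm x0 ((T ^^ n) \<mu> - \<mu>) < \<delta>"
      if n: "p dvd n \<and> fnorm x0 ((T ^^ n) ?\<nu> - ?\<nu>) < c * \<delta>" for n
    proof -
      have "(T ^^ n) \<mu> - \<mu> = (\<lambda>\<phi>. (1 / c) * ((T ^^ n) ?\<nu> - ?\<nu>) \<phi>)"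
        using funpow_lincomb[OF m \<mu>, of n 1 c] funpow_dvd_period[OF period(1)] n \<open>c > 0\<close>
        by (auto simp: field_simps)
      then have "fnorm x0 ((T ^^ n) \<mu> - \<mu>) \<le> fnorm x0 ((T ^^ n) ?\<nu> - ?\<nu>) / c"
        using fnorm_scale_le[of x0 "(T ^^ n) ?\<nu> - ?\<nu>" "1 / c"] \<open>c > 0\<close> \<nu>_rec
        by (simp add: recurrent_set_iff freespace_bounded freespace_diff funpow_in_freespace)
      also have "\<dots> < \<delta>" using n \<open>c > 0\<close> by (simp add: field_simps)
      finally show ?thesis .
    qed
    show ?thesis
      by (rule frequently_elim1[OF recurrent_along_multiples[OF \<nu>_rec \<open>p > 0\<close> \<open>c * \<delta> > 0\<close>] small])
  qed
  then show ?thesis using \<mu> recurrent_set_iff by blast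
qed

lemma recurrent_set_eq_freespace_if_periodic_centre:
  assumes m: "m \<in> freespace x0" and period: "(T ^^ p) m = m" "p > 0" and "\<epsilon> > 0"
    and ball: "\<forall>\<nu>\<in>freespace x0. fnorm x0 (\<nu> - m) < \<epsilon> \<longrightarrow> \<nu> \<in> recurrent_set x0 T"
  shows "recurrent_set x0 T = freespace x0"
proof -
  have "\<mu> \<in> recurrent_set x0 T" if \<mu>: "\<mu> \<in> freespace x0" for \<mu>
  proof -
    have "0 \<le> fnorm x0 \<mu>" using fnorm_nonneg freespace_bounded \<mu> by blast
    define c where "c = \<epsilon> / (2 * (fnorm x0 \<mu> + 1))"
    have "c > 0" unfolding c_def using \<open>\<epsilon> > 0\<close> \<open>0 \<le> fnorm x0 \<mu>\<close> by simp
    have "(\<lambda>\<phi>. 1 * m \<phi> + c * \<mu> \<phi>) - m = (\<lambda>\<phi>. c * \<mu> \<phi>)" by auto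
    then have "fnorm x0 ((\<lambda>\<phi>. 1 * m \<phi> + c * \<mu> \<phi>) - m) \<le> c * fnorm x0 \<mu>"
      using fnorm_scale_le[OF freespace_bounded[OF \<mu>], of c] \<open>c > 0\<close> by simp
    also have "\<dots> < \<epsilon>"
      unfolding c_def using \<open>0 \<le> fnorm x0 \<mu>\<close> \<open>\<epsilon> > 0\<close> by (simp add: field_simps add_nonneg_pos)
    finally have "(\<lambda>\<phi>. 1 * m \<phi> + c * \<mu> \<phi>) \<in> recurrent_set x0 T"
      using ball freespace_lincomb[OF m \<mu>] by blast
    then show ?thesis by (rule recurrent_if_periodic_translate_recurrent[OF m period \<mu> \<open>c > 0\<close>])
  qed
  then show ?thesis using recurrent_set_iff by blast
qed

end

section \<open>Operators induced by a map of the base space\<close>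

locale induced_operator = free_operator +
  fixes f :: "'a::metric_space \<Rightarrow> 'a"
  assumes T_delta: "\<forall>x. T (delta x0 x) = delta x0 (f x)"
begin

lemma T_molecule: "T (molecule x0 k a p) = molecule x0 k a (\<lambda>i. f (p i))"
proof (induction k)
  case 0
  let ?z = "molecule x0 0 a p"
  have "T (\<lambda>\<phi>. 0 * ?z \<phi> + 0 * ?z \<phi>) = (\<lambda>\<phi>. 0 * T ?z \<phi> + 0 * T ?z \<phi>)"
    using lin molecule_in_freespace by blast
  then show ?case by (simp add: molecule_def)
next
  case (Suc k)
  let ?m = "molecule x0 k a p"
  have split: "molecule x0 (Suc k) a p = (\<lambda>\<phi>. 1 * ?m \<phi> + a k * delta x0 (p k) \<phi>)"
    by (auto simp: molecule_def)
  have "delta x0 (p k) \<in> freespace x0"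
    using molecule_in_freespace[of x0 1 "\<lambda>_. 1" "\<lambda>_. p k"] by (simp add: molecule_def)
  then have "T (molecule x0 (Suc k) a p) = (\<lambda>\<phi>. 1 * T ?m \<phi> + a k * T (delta x0 (p k)) \<phi>)"
    unfolding split using lin molecule_in_freespace by blast
  then show ?case using Suc T_delta by (simp add: molecule_def)
qed

lemma funpow_molecule: "(T ^^ n) (molecule x0 k a p) = molecule x0 k a (\<lambda>i. (f ^^ n) (p i))"
  by (induction n) (simp_all add: T_molecule)

lemma finite_orbit_molecule:
  assumes "\<forall>x. finite (range (\<lambda>n. (f ^^ n) x))"
  shows "finite (range (\<lambda>n. (T ^^ n) (molecule x0 k a p)))"
proof -
  define S where "S = (\<Union>i<k. range (\<lambda>n. (f ^^ n) (p i)))"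
  have "finite S" unfolding S_def using assms by auto
  define orbit_points where "orbit_points n = map (\<lambda>i. (f ^^ n) (p i)) [0..<k]" for n
  have "range orbit_points \<subseteq> {xs. set xs \<subseteq> S \<and> length xs = k}"
    unfolding orbit_points_def S_def by force
  then have "finite (range orbit_points)"
    using finite_lists_length_eq[OF \<open>finite S\<close>] finite_subset by blast
  moreover have "range (\<lambda>n. (T ^^ n) (molecule x0 k a p))
      = (\<lambda>xs. molecule x0 k a (\<lambda>i. xs ! i)) ` range orbit_points"
    unfolding funpow_molecule orbit_points_def image_image
    by (intro image_cong refl ext) (simp add: molecule_def)
  ultimately show ?thesis by simp
qed

lemma periodic_if_recurrent_molecule:
  assumes "molecule x0 k a p \<in> recurrent_set x0 T" "\<forall>x. finite (range (\<lambda>n. (f ^^ n) x))"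
  obtains q where "q > 0" "(T ^^ q) (molecule x0 k a p) = molecule x0 k a p"
proof -
  let ?m = "molecule x0 k a p"
  obtain q where "q > 0" "fnorm x0 ((T ^^ q) ?m - ?m) = 0"
    using recurrent_finite_orbit_returns[OF assms(1) finite_orbit_molecule[OF assms(2)]] .
  moreover have "(T ^^ q) ?m - ?m \<in> molecules x0"
    unfolding funpow_molecule by (intro molecules_diff) (auto simp: molecules_eq)
  ultimately have "(T ^^ q) ?m - ?m = (\<lambda>_. 0)" using molecule_eq_0_if_fnorm_eq_0 by blast
  then have "(T ^^ q) ?m = ?m" by (simp add: fun_eq_iff)
  with \<open>q > 0\<close> show ?thesis using that by blast
qed

end

text \<open>The hypotheses \<open>f0\<close> and \<open>flip\<close> only serve to make the induced operator exist;
here it is given as \<open>T\<close> together with its defining property \<open>T_delta\<close>.\<close>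

theorem theorem3p19:
  fixes x0 :: "'a::complete_space" and f :: "'a \<Rightarrow> 'a"
    and T :: "(('a \<Rightarrow> real) \<Rightarrow> real) \<Rightarrow> (('a \<Rightarrow> real) \<Rightarrow> real)"
  assumes f0: "f x0 = x0" and flip: "\<exists>C. C-lipschitz_on UNIV f"
    and T_maps: "\<forall>\<mu>\<in>freespace x0. T \<mu> \<in> freespace x0"
    and T_lin: "\<forall>\<mu>\<in>freespace x0. \<forall>\<nu>\<in>freespace x0. \<forall>a b::real.
        T (\<lambda>\<phi>. a * \<mu> \<phi> + b * \<nu> \<phi>) = (\<lambda>\<phi>. a * T \<mu> \<phi> + b * T \<nu> \<phi>)"
    and T_bdd: "\<exists>K. \<forall>\<mu>\<in>freespace x0. fnorm x0 (T \<mu>) \<le> K * fnorm x0 \<mu>"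
    and T_delta: "\<forall>x. T (delta x0 x) = delta x0 (f x)"
    and int_ne: "\<exists>\<mu>\<in>recurrent_set x0 T. \<exists>\<epsilon>>0. \<forall>\<nu>\<in>freespace x0.
        fnorm x0 (\<nu> - \<mu>) < \<epsilon> \<longrightarrow> \<nu> \<in> recurrent_set x0 T"
    and orbits: "\<forall>x. finite (range (\<lambda>n. (f ^^ n) x))"
  shows "recurrent_set x0 T = freespace x0"
proof -
  interpret induced_operator x0 T f
    using T_maps T_lin T_bdd T_delta by unfold_locales
  obtain \<mu> \<epsilon> where "\<mu> \<in> recurrent_set x0 T" "\<epsilon> > 0"
    and ball: "\<forall>\<nu>\<in>freespace x0. fnorm x0 (\<nu> - \<mu>) < \<epsilon> \<longrightarrow> \<nu> \<in> recurrent_set x0 T"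
    using int_ne by blast
  then have "\<mu> \<in> freespace x0" using recurrent_set_iff by blast
  then obtain k a p where ball': "\<forall>\<nu>\<in>freespace x0.
      fnorm x0 (\<nu> - molecule x0 k a p) < \<epsilon> / 2 \<longrightarrow> \<nu> \<in> recurrent_set x0 T"
    by (rule molecule_ball_within[OF _ \<open>\<epsilon> > 0\<close> ball])
  have "fnorm x0 (molecule x0 k a p - molecule x0 k a p) < \<epsilon> / 2"
    using fnorm_le[of x0 "molecule x0 k a p - molecule x0 k a p" 0] \<open>\<epsilon> > 0\<close> by simp
  then have "molecule x0 k a p \<in> recurrent_set x0 T" using ball' molecule_in_freespace by blast
  then obtain q where "q > 0" "(T ^^ q) (molecule x0 k a p) = molecule x0 k a p"
    using periodic_if_recurrent_molecule orbits by blast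
  then show ?thesis
    using recurrent_set_eq_freespace_if_periodic_centre[OF molecule_in_freespace _ _ _ ball']
      \<open>\<epsilon> > 0\<close> by simp
qed

end
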